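(* Let $M$ and $I$ be observable FSMs over the same input alphabet $\Sigma_I$ and output alphabet $\Sigma_O$, with initial states $s_0$ and $t_0$ respectively. Let $k\in\mathbb{N}$, let $\bar x_1/\bar y_1,\ \bar x_2/\bar y_2\in L(M)\cap L(I)$, and suppose that a set $W\subseteq\Sigma_I^*$ r($k$)-distinguishes the states $s_0\text{-after-}\bar x_1/\bar y_1$ and $s_0\text{-after-}\bar x_2/\bar y_2$ of $M$. If $I$ passes every test case in $\{\bar x_1,\bar x_2\}.W$, then $t_0\text{-after-}\bar x_1/\bar y_1\neq t_0\text{-after-}\bar x_2/\bar y_2$, i.e. the two traces reach distinct states of $I$.
   Context: An FSM is $M=(S,s_0,\Sigma_I,\Sigma_O,h_M)$ with finite state set $S$, initial state $s_0$, finite input/output alphabets and transition relation $h_M\subseteq S\times\Sigma_I\times\Sigma_O\times S$. IO sequences $(x_1,y_1)\dots(x_n,y_n)$ are written $x_1\dots x_n/y_1\dots y_n$. $L_M(s)$ is the set of IO sequences $x_1\dots x_k/y_1\dots y_k$ such that there are states $s=q_0,q_1,\dots,q_k$ with $(q_{i-1},x_i,y_i,q_i)\in h_M$ for all $i$; $L(M)=L_M(s_0)$. $out(s,x)=\{y\mid\exists s'.(s,x,y,s')\in h_M\}$. $M$ is observable if for each $s,x,y$ there is at most one $s'$ with $(s,x,y,s')\in h_M$; then $s\text{-after-}\alpha$ denotes the unique state reached from $s$ by $\alpha\in L_M(s)$. $\Delta_M(s)=\{x\in\Sigma_I\mid out(s,x)\neq\varnothing\}$ is the set of defined inputs of $s$,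 and for an IO sequence $\alpha$, $\Delta_M(\alpha)=\Delta_M(s_0\text{-after-}\alpha)$ if $\alpha\in L(M)$ and $\Delta_M(\alpha)=\varnothing$ otherwise. $\mathrm{Pref}(\alpha)$ is the set of prefixes of a sequence (including $\epsilon$ and $\alpha$), lifted to sets by union; $A.B=\{a.b\mid a\in A,b\in B\}$ for sets of sequences, with the convention $A.\varnothing=A$. r-distinguishing sets: every $W\subseteq\Sigma_I^*$ r(0)-distinguishes any two states $s_1,s_2$ of $M$ with $\Delta_M(s_1)\neq\Delta_M(s_2)$. For $k\ge0$, $W$ r($k+1$)-distinguishes $s_1,s_2$ if $W$ r($k$)-distinguishes them, or if there is an input $x\in\Delta_M(s_1)\cap\Delta_M(s_2)$ with $x\in\mathrm{Pref}(W)$ (as a length-one sequence) such that for every $y\in out(s_1,x)\cap out(s_2,x)$ there exists $W'\subseteq\Sigma_I^*$ with $\{x\}.W'\subseteq\mathrm{Pref}(W)$ and $W'$ r($k$)-distinguishes $s_1\text{-after-}x/y$ and $s_2\text{-after-}x/y$. Pass relation: $I$ passes a test case $\bar x\in\Sigma_I^*$ if for every prefix $\bar x_1$ of $\bar x$ and every $\bar x_1/\bar y_1\in L(I)$ we have $\bar x_1/\bar y_1\in L(M)$ and $\Delta_I(\bar x_1/\bar y_1)=\Delta_M(\bar x_1/\bar y_1)$. $I$ passes a set $T$ if it passes every element of $T$. *)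

theory Defs
  imports Main "HOL-Library.Sublist"
begin

record ('s, 'a, 'b) fsm =
  states      :: "'s set"
  initial     :: 's
  inputs      :: "'a set"
  outputs     :: "'b set"
  transitions :: "('s \<times> 'a \<times> 'b \<times> 's) set"

definition well_formed_fsm :: "('s, 'a, 'b) fsm \<Rightarrow> bool" where
  "well_formed_fsm M \<longleftrightarrow> finite (states M) \<and> initial M \<in> states M
     \<and> finite (inputs M) \<and> finite (outputs M)
     \<and> transitions M \<subseteq> states M \<times> inputs M \<times> outputs M \<times> states M"

definition observable :: "('s, 'a, 'b) fsm \<Rightarrow> bool" where
  "observable M \<longleftrightarrow> (\<forall>s x y s1 s2. (s,x,y,s1) \<in> transitions M \<and> (s,x,y,s2) \<in> transitions M \<longrightarrow> s1 = s2)"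

fun reaches :: "('s, 'a, 'b) fsm \<Rightarrow> 's \<Rightarrow> ('a \<times> 'b) list \<Rightarrow> 's \<Rightarrow> bool" where
  "reaches M s [] s' = (s' = s)"
| "reaches M s ((x,y) # io) s' = (\<exists>q. (s,x,y,q) \<in> transitions M \<and> reaches M q io s')"

definition LS :: "('s, 'a, 'b) fsm \<Rightarrow> 's \<Rightarrow> ('a \<times> 'b) list set" where
  "LS M s = {io. \<exists>s'. reaches M s io s'}"

definition L :: "('s, 'a, 'b) fsm \<Rightarrow> ('a \<times> 'b) list set" where
  "L M = LS M (initial M)"

definition after :: "('s, 'a, 'b) fsm \<Rightarrow> 's \<Rightarrow> ('a \<times> 'b) list \<Rightarrow> 's" where
  "after M s io = (THE s'. reaches M s io s')"

definition out :: "('s, 'a, 'b) fsm \<Rightarrow> 's \<Rightarrow> 'a \<Rightarrow> 'b set" where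
  "out M s x = {y. \<exists>s'. (s,x,y,s') \<in> transitions M}"

definition defined_inputs :: "('s, 'a, 'b) fsm \<Rightarrow> 's \<Rightarrow> 'a set" where
  "defined_inputs M s = {x \<in> inputs M. out M s x \<noteq> {}}"

definition defined_inputs_seq :: "('s, 'a, 'b) fsm \<Rightarrow> ('a \<times> 'b) list \<Rightarrow> 'a set" where
  "defined_inputs_seq M io =
     (if io \<in> L M then defined_inputs M (after M (initial M) io) else {})"

definition Pref :: "'x list set \<Rightarrow> 'x list set" where
  "Pref A = {p. \<exists>w\<in>A. prefix p w}"

text \<open>Concatenation of sets of sequences with the convention A.{} = A.\<close>
definition seq_concat :: "'x list set \<Rightarrow> 'x list set \<Rightarrow> 'x list set" where
  "seq_concat A B = (if B = {} then A else {a @ b | a b. a \<in> A \<and> b \<in> B})"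

fun r_dist :: "('s, 'a, 'b) fsm \<Rightarrow> nat \<Rightarrow> 'a list set \<Rightarrow> 's \<Rightarrow> 's \<Rightarrow> bool" where
  "r_dist M 0 W s1 s2 = (defined_inputs M s1 \<noteq> defined_inputs M s2)"
| "r_dist M (Suc k) W s1 s2 =
     (r_dist M k W s1 s2 \<or>
      (\<exists>x \<in> defined_inputs M s1 \<inter> defined_inputs M s2. [x] \<in> Pref W \<and>
         (\<forall>y \<in> out M s1 x \<inter> out M s2 x. \<exists>W'. W' \<subseteq> lists (inputs M) \<and>
              seq_concat {[x]} W' \<subseteq> Pref W \<and>
              r_dist M k W' (after M s1 [(x,y)]) (after M s2 [(x,y)]))))"

definition passes :: "('s, 'a, 'b) fsm \<Rightarrow> ('t, 'a, 'b) fsm \<Rightarrow> 'a list \<Rightarrow> bool" where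
  "passes M I xs \<longleftrightarrow> (\<forall>io. prefix (map fst io) xs \<and> io \<in> L I \<longrightarrow>
       io \<in> L M \<and> defined_inputs_seq I io = defined_inputs_seq M io)"

definition passes_set :: "('s, 'a, 'b) fsm \<Rightarrow> ('t, 'a, 'b) fsm \<Rightarrow> 'a list set \<Rightarrow> bool" where
  "passes_set M I T \<longleftrightarrow> (\<forall>xs\<in>T. passes M I xs)"

end

theory Submission
  imports Defs
begin

text \<open>Suppose the two traces reached the same state t of I. Induction on k: at level 0 the
  test cases for the traces themselves show that I offers at t the defined inputs of both
  M-states, which differ. At level k+1 the distinguishing input x is defined at t, so I
  answers it with some y; the test cases extending the traces by x force both extended
  traces into L(M), so y is an output common to both M-states, and the set W' attached to
  y by the definition of r-distinguishability lets the induction hypothesis separate the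
  extended traces, although both lead from t to the same state of I.\<close>

lemma reaches_append:
  "reaches M s (io @ io') s' \<longleftrightarrow> (\<exists>q. reaches M s io q \<and> reaches M q io' s')"
proof (induction io arbitrary: s)
  case Nil
  then show ?case by simp
next
  case (Cons p io)
  then show ?case by (cases p) (simp, blast)
qed

lemma reaches_snoc:
  "reaches M s (io @ [(x, y)]) s' \<longleftrightarrow> (\<exists>q. reaches M s io q \<and> (q, x, y, s') \<in> transitions M)"
  by (simp add: reaches_append)

lemma reaches_unique:
  assumes "observable M" and "reaches M s io s1" and "reaches M s io s2"
  shows "s1 = s2"
  using assms(2,3)
proof (induction io arbitrary: s)
  case Nil
  then show ?case by simp
next
  case (Cons p io)
  obtain x y where p: "p = (x, y)" by (cases p)
  with Cons.prems obtain q1 q2 where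
    "(s, x, y, q1) \<in> transitions M" "reaches M q1 io s1"
    "(s, x, y, q2) \<in> transitions M" "reaches M q2 io s2"
    by auto
  moreover from this have "q1 = q2"
    using \<open>observable M\<close> unfolding observable_def by blast
  ultimately show ?case using Cons.IH by blast
qed

lemma after_eqI: "observable M \<Longrightarrow> reaches M s io s' \<Longrightarrow> after M s io = s'"
  unfolding after_def by (blast intro: the_equality reaches_unique)

lemma reaches_after: "observable M \<Longrightarrow> io \<in> LS M s \<Longrightarrow> reaches M s io (after M s io)"
  unfolding LS_def using after_eqI by fastforce

lemma LS_snoc_iff:
  assumes "observable M" and "io \<in> LS M s"
  shows "io @ [(x, y)] \<in> LS M s \<longleftrightarrow> y \<in> out M (after M s io) x"
proof -
  have "io @ [(x, y)] \<in> LS M s \<longleftrightarrow> (\<exists>s'. reaches M s (io @ [(x, y)]) s')"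
    by (simp add: LS_def)
  also have "\<dots> \<longleftrightarrow> (\<exists>q q'. reaches M s io q \<and> (q, x, y, q') \<in> transitions M)"
    unfolding reaches_snoc by blast
  also have "\<dots> \<longleftrightarrow> y \<in> out M (after M s io) x"
    using reaches_after[OF assms] reaches_unique[OF \<open>observable M\<close>]
    unfolding out_def by blast
  finally show ?thesis .
qed

lemma after_snoc:
  assumes "observable M" and "io @ [(x, y)] \<in> LS M s"
  shows "after M s (io @ [(x, y)]) = after M (after M s io) [(x, y)]"
proof -
  from reaches_after[OF assms] obtain q where
    q: "reaches M s io q" and tr: "(q, x, y, after M s (io @ [(x, y)])) \<in> transitions M"
    unfolding reaches_snoc by blast
  have "after M s io = q"
    using after_eqI[OF \<open>observable M\<close> q] .
  with tr show ?thesis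
    using after_eqI[OF \<open>observable M\<close>] by simp
qed

lemma passes_prefix: "passes M I xs \<Longrightarrow> prefix ys xs \<Longrightarrow> passes M I ys"
  unfolding passes_def by (meson prefix_order.trans)

lemma passes_defined_inputs:
  assumes "io \<in> L M \<inter> L I" and "passes M I (map fst io)"
  shows "defined_inputs I (after I (initial I) io) = defined_inputs M (after M (initial M) io)"
  using assms unfolding passes_def defined_inputs_seq_def by auto

text \<open>The test case xs itself is included because level 0 of r-distinguishability needs it
  even for empty W; by the convention A.{} = A it belongs to, or is a prefix of a member of,
  every set {xs}.W.\<close>

definition passes_with_suffixes ::
    "('s, 'a, 'b) fsm \<Rightarrow> ('t, 'a, 'b) fsm \<Rightarrow> 'a list \<Rightarrow> 'a list set \<Rightarrow> bool" where
  "passes_with_suffixes M I xs W \<longleftrightarrow> passes M I xs \<and> (\<forall>w\<in>W. passes M I (xs @ w))"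

lemma passes_set_seq_concat_imp_passes_with_suffixes:
  assumes "passes_set M I (seq_concat X W)" and "xs \<in> X"
  shows "passes_with_suffixes M I xs W"
proof (cases "W = {}")
  case True
  then show ?thesis
    using assms unfolding passes_with_suffixes_def passes_set_def seq_concat_def by simp
next
  case False
  have suffixes: "passes M I (xs @ w)" if "w \<in> W" for w
  proof -
    have "xs @ w \<in> seq_concat X W"
      using assms(2) that False unfolding seq_concat_def by auto
    then show ?thesis using assms(1) unfolding passes_set_def by blast
  qed
  from False obtain w where "w \<in> W" by blast
  then have "passes M I xs"
    using passes_prefix[OF suffixes] by simp
  with suffixes show ?thesis unfolding passes_with_suffixes_def by blast
qed

lemma passes_with_suffixes_Pref:
  assumes "passes_with_suffixes M I xs W" and "v \<in> Pref W"
  shows "passes M I (xs @ v)"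
proof -
  from \<open>v \<in> Pref W\<close> obtain w where "w \<in> W" and "prefix v w"
    unfolding Pref_def by blast
  then have "passes M I (xs @ w)" and "prefix (xs @ v) (xs @ w)"
    using assms(1) unfolding passes_with_suffixes_def by simp_all
  then show ?thesis by (rule passes_prefix)
qed

lemma passes_with_suffixes_snoc:
  assumes "passes_with_suffixes M I xs W"
    and "[x] \<in> Pref W" and "seq_concat {[x]} W' \<subseteq> Pref W"
  shows "passes_with_suffixes M I (xs @ [x]) W'"
proof -
  have "x # w' \<in> Pref W" if "w' \<in> W'" for w'
  proof -
    have "[x] @ w' \<in> seq_concat {[x]} W'"
      using that unfolding seq_concat_def by auto
    then show ?thesis using assms(3) by auto
  qed
  then have "passes M I (xs @ x # w')" if "w' \<in> W'" for w'
    using passes_with_suffixes_Pref[OF assms(1)] that by blast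
  moreover have "passes M I (xs @ [x])"
    using passes_with_suffixes_Pref[OF assms(1,2)] .
  ultimately show ?thesis
    unfolding passes_with_suffixes_def by simp
qed

lemma common_response_to_shared_state:
  assumes "observable M" and "observable I"
    and in1: "io1 \<in> L M \<inter> L I" and in2: "io2 \<in> L M \<inter> L I"
    and same: "after I (initial I) io1 = after I (initial I) io2"
    and x: "x \<in> defined_inputs I (after I (initial I) io1)"
    and passes: "passes M I (map fst io1 @ [x])" "passes M I (map fst io2 @ [x])"
  obtains y where "io1 @ [(x, y)] \<in> L M \<inter> L I" "io2 @ [(x, y)] \<in> L M \<inter> L I"
    and "y \<in> out M (after M (initial M) io1) x \<inter> out M (after M (initial M) io2) x"
    and "after I (initial I) (io1 @ [(x, y)]) = after I (initial I) (io2 @ [(x, y)])"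
proof -
  from x obtain y where "y \<in> out I (after I (initial I) io1) x"
    unfolding defined_inputs_def by blast
  then have inI: "io1 @ [(x, y)] \<in> L I" "io2 @ [(x, y)] \<in> L I"
    using LS_snoc_iff[OF \<open>observable I\<close>] in1 in2 same unfolding L_def by simp_all
  with passes have inM: "io1 @ [(x, y)] \<in> L M" "io2 @ [(x, y)] \<in> L M"
    unfolding passes_def by simp_all
  then have "y \<in> out M (after M (initial M) io1) x \<inter> out M (after M (initial M) io2) x"
    using LS_snoc_iff[OF \<open>observable M\<close>] in1 in2 unfolding L_def by simp
  moreover have "after I (initial I) (io1 @ [(x, y)]) = after I (initial I) (io2 @ [(x, y)])"
    using after_snoc[OF \<open>observable I\<close>] inI same unfolding L_def by simp
  ultimately show ?thesis
    using that inI inM by blast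
qed

lemma r_dist_separates_after:
  assumes "observable M" and "observable I"
  shows "io1 \<in> L M \<inter> L I \<Longrightarrow> io2 \<in> L M \<inter> L I
    \<Longrightarrow> r_dist M k W (after M (initial M) io1) (after M (initial M) io2)
    \<Longrightarrow> passes_with_suffixes M I (map fst io1) W
    \<Longrightarrow> passes_with_suffixes M I (map fst io2) W
    \<Longrightarrow> after I (initial I) io1 \<noteq> after I (initial I) io2"
proof (induction k arbitrary: W io1 io2)
  case 0
  then have "defined_inputs I (after I (initial I) io1) \<noteq> defined_inputs I (after I (initial I) io2)"
    using passes_defined_inputs[of _ M I] unfolding passes_with_suffixes_def by simp
  then show ?case by auto
next
  case (Suc k)
  define s1 where "s1 = after M (initial M) io1"
  define s2 where "s2 = after M (initial M) io2"
  define t where "t = after I (initial I) io1"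
  show ?case
  proof
    assume same: "after I (initial I) io1 = after I (initial I) io2"
    show False
    proof (cases "r_dist M k W s1 s2")
      case True
      with Suc.IH[OF Suc.prems(1,2) _ Suc.prems(4,5)] same show False
        unfolding s1_def s2_def by blast
    next
      case False
      have "r_dist M (Suc k) W s1 s2"
        using Suc.prems(3) unfolding s1_def s2_def .
      with False obtain x where
        x: "x \<in> defined_inputs M s1" "[x] \<in> Pref W" and
        step: "\<forall>y \<in> out M s1 x \<inter> out M s2 x. \<exists>W'. W' \<subseteq> lists (inputs M) \<and>
                  seq_concat {[x]} W' \<subseteq> Pref W \<and>
                  r_dist M k W' (after M s1 [(x, y)]) (after M s2 [(x, y)])"
        by (simp only: r_dist.simps) blast
      have "defined_inputs I t = defined_inputs M s1"
        using passes_defined_inputs Suc.prems(1,4)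
        unfolding t_def s1_def passes_with_suffixes_def by blast
      moreover have "passes M I (map fst io1 @ [x])" "passes M I (map fst io2 @ [x])"
        using passes_with_suffixes_Pref[OF Suc.prems(4)] passes_with_suffixes_Pref[OF Suc.prems(5)]
          x(2) by simp_all
      ultimately obtain y where
        ext: "io1 @ [(x, y)] \<in> L M \<inter> L I" "io2 @ [(x, y)] \<in> L M \<inter> L I"
        and y: "y \<in> out M s1 x \<inter> out M s2 x"
        and same_ext: "after I (initial I) (io1 @ [(x, y)]) = after I (initial I) (io2 @ [(x, y)])"
        using common_response_to_shared_state[OF \<open>observable M\<close> \<open>observable I\<close> Suc.prems(1,2) same]
          x(1) unfolding t_def s1_def s2_def by metis
      from y step obtain W' where W': "seq_concat {[x]} W' \<subseteq> Pref W"
        and dist: "r_dist M k W' (after M s1 [(x, y)]) (after M s2 [(x, y)])"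
        by blast
      have "after I (initial I) (io1 @ [(x, y)]) \<noteq> after I (initial I) (io2 @ [(x, y)])"
      proof (rule Suc.IH[OF ext])
        show "r_dist M k W' (after M (initial M) (io1 @ [(x, y)]))
            (after M (initial M) (io2 @ [(x, y)]))"
          using dist after_snoc[OF \<open>observable M\<close>] ext unfolding L_def s1_def s2_def by simp
        show "passes_with_suffixes M I (map fst (io1 @ [(x, y)])) W'"
          "passes_with_suffixes M I (map fst (io2 @ [(x, y)])) W'"
          using passes_with_suffixes_snoc[OF _ x(2) W'] Suc.prems(4,5) by simp_all
      qed
      with same_ext show False by contradiction
    qed
  qed
qed

theorem lemma1:
  fixes M :: "('s, 'a, 'b) fsm" and I :: "('t, 'a, 'b) fsm"
    and k :: nat and io1 io2 :: "('a \<times> 'b) list" and W :: "'a list set"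
  assumes "well_formed_fsm M" and "well_formed_fsm I"
    and "observable M" and "observable I"
    and "inputs I = inputs M" and "outputs I = outputs M"
    and "io1 \<in> L M \<inter> L I" and "io2 \<in> L M \<inter> L I"
    and "W \<subseteq> lists (inputs M)"
    and "r_dist M k W (after M (initial M) io1) (after M (initial M) io2)"
    and "passes_set M I (seq_concat {map fst io1, map fst io2} W)"
  shows "after I (initial I) io1 \<noteq> after I (initial I) io2"
proof (rule r_dist_separates_after[OF assms(3,4,7,8,10)])
  show "passes_with_suffixes M I (map fst io1) W" "passes_with_suffixes M I (map fst io2) W"
    using passes_set_seq_concat_imp_passes_with_suffixes[OF assms(11)] by simp_all
qed

end
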